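(* Let $q$ be a prime power and let $\lambda$ be the Liouville function on monic polynomials of $\mathbb{F}_{q^2}[T]$. For every unitary self-reciprocal polynomial $f\in\mathbb{F}_{q^2}[T]$ we have $\lambda(f)=(-1)^{\deg f}$.
   Context: The Liouville function $\lambda$ is the unique completely multiplicative function on monic polynomials of $\mathbb{F}_{q^2}[T]$ with $\lambda(P)=-1$ for every monic irreducible $P$. For a monic $f\in\mathbb{F}_{q^2}[T]$ of degree $n$ with $f(0)\neq0$, let $\sigma(f)$ be the polynomial obtained by raising each coefficient of $f$ to the $q$-th power, and define $\tilde f(T)=T^n\sigma(f)(T^{-1})/\sigma(f)(0)$; explicitly, if $f=a_0+a_1T+\cdots+a_{n-1}T^{n-1}+T^n$ then $\tilde f=(1/a_0)^q+(a_{n-1}/a_0)^qT+\cdots+(a_1/a_0)^qT^{n-1}+T^n$. A monic $f$ with $f(0)\ne0$ is unitary self-reciprocal if $f=\tilde f$ (the constant polynomial $1$ included). *)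

theory Defs
  imports "HOL-Computational_Algebra.Computational_Algebra"
begin

definition liouville :: "'a::field_gcd poly \<Rightarrow> int" where
  "liouville f = (-1) ^ size (prime_factorization f)"

definition frob_poly :: "nat \<Rightarrow> 'a::field poly \<Rightarrow> 'a poly" where
  "frob_poly q f = map_poly (\<lambda>c. c ^ q) f"

text \<open>tilde f = T^n sigma(f)(1/T) / sigma(f)(0), with n = deg f.\<close>
definition unitary_recip :: "nat \<Rightarrow> 'a::field poly \<Rightarrow> 'a poly" where
  "unitary_recip q f = smult (inverse (coeff (frob_poly q f) 0)) (reflect_poly (frob_poly q f))"

definition unitary_self_reciprocal :: "nat \<Rightarrow> 'a::field poly \<Rightarrow> bool" where
  "unitary_self_reciprocal q f \<longleftrightarrow>
     lead_coeff f = 1 \<and> poly f 0 \<noteq> 0 \<and> f = unitary_recip q f"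

end

(*
  Write U for unitary_recip q and Q = q^2 for the size of the field.  U is multiplicative,
  preserves degrees, and is an involution on monic polynomials with nonzero constant term,
  so it maps irreducible factors to irreducible factors and, when U f = f, permutes the
  prime factorisation of f.  As lambda(f) (-1)^(deg f) = (-1)^e, where e is the number of
  prime factors of even degree, it suffices that no irreducible P of even degree satisfies
  U P = P: the even-degree factors then pair off as {P, U P}.

  Let P be irreducible of degree n with U P = P and let a be a root of P in the algebraic
  closure.  The roots of P are the conjugates a^(Q^i), i < n, and a^(Q^m) = a iff n divides m.
  Self-reciprocity makes a^(-q) a root, say a^(-q) = a^(Q^i); applying z |-> z^(Q^i) once
  more gives a^(Q^(2i)) = a^(q^2) = a^Q, so n divides 2i - 1 and n is odd.
*)

theory Submission
  imports Defs "HOL-Algebra.Algebraic_Closure_Type" "HOL-Library.Cardinality"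
begin

hide_const (open) Divisibility.prime Divisibility.irreducible Module.module.smult
  Polynomials.lead_coeff Polynomials.degree UnivPoly.up_ring.monom UnivPoly.up_ring.coeff

section \<open>Finite fields\<close>

lemma of_nat_card_UNIV_eq_0: "(of_nat CARD('a) :: 'a::{finite,ring_1}) = 0"
proof -
  have "bij_betw (\<lambda>z::'a. z + 1) UNIV UNIV"
    by (rule bij_betwI[of _ _ _ "\<lambda>z. z - 1"]) auto
  from sum.reindex_bij_betw[OF this, of "\<lambda>z. z"]
  have "(\<Sum>z\<in>UNIV. z + 1) = (\<Sum>z\<in>UNIV. z :: 'a)" .
  then show ?thesis
    by (simp add: sum.distrib)
qed

(* The library's finite_field_power_card_eq_same is stated for the class finite_field,
   which the sort {field, finite} does not provide. *)
lemma power_card_UNIV_eq_self: "(x::'a::{field,finite}) ^ CARD('a) = x"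
proof (cases "x = 0")
  case False
  let ?R = "ring_of_type_algebra :: 'a ring"
  interpret field ?R
    by (rule field_from_type_algebra)
  have units: "Units ?R = UNIV - {0}"
    by (simp add: field_Units) (simp add: ring_of_type_algebra_def)
  have pow: "y [^]\<^bsub>?R\<^esub> n = y ^ n" for y :: 'a and n
    by (induction n) (simp_all add: ring_of_type_algebra_def)
  have "x [^]\<^bsub>?R\<^esub> card (Units ?R) = \<one>\<^bsub>?R\<^esub>"
    by (rule units_power_order_eq_one) (simp_all add: units False)
  then have "x ^ (CARD('a) - 1) = 1"
    by (simp add: units pow card_Diff_singleton) (simp add: ring_of_type_algebra_def)
  moreover have "CARD('a) = Suc (CARD('a) - 1)"
    by simp
  ultimately show ?thesis
    by (metis power_Suc mult_1_right)
qed simp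

lemma one_less_card_UNIV_field: "1 < CARD('a::{field,finite})"
proof -
  have "card {0, 1 :: 'a} \<le> CARD('a)"
    by (rule card_mono) auto
  then show ?thesis
    by simp
qed

lemma CHAR_eq_if_card_eq_prime_power:
  assumes "prime p" "0 < m" "CARD('a) = p ^ m"
  shows "CHAR('a::{field,finite}) = p"
proof -
  have "prime CHAR('a)"
    by (intro prime_CHAR_semidom finite_imp_CHAR_pos) simp
  moreover have "CHAR('a) dvd CARD('a)"
    using of_nat_card_UNIV_eq_0[where 'a='a] by (simp only: of_nat_eq_0_iff_char_dvd)
  ultimately have "CHAR('a) dvd p"
    using assms(3) prime_dvd_power by metis
  then show ?thesis
    using \<open>prime CHAR('a)\<close> assms(1) primes_dvd_imp_eq by blast
qed

section \<open>Coefficient maps and prime characteristic\<close>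

lemma map_poly_add:
  assumes "f 0 = 0" "\<And>a b. f (a + b) = f a + f b"
  shows "map_poly f (p + q) = map_poly f p + map_poly f q"
  by (intro poly_eqI) (simp add: coeff_map_poly assms)

lemma map_poly_diff:
  assumes "f 0 = 0" "\<And>a b. f (a - b) = f a - f b"
  shows "map_poly f (p - q) = map_poly f p - map_poly f q"
  by (intro poly_eqI) (simp add: coeff_map_poly assms)

lemma map_poly_mult:
  fixes f :: "'a::comm_ring_1 \<Rightarrow> 'b::comm_ring_1"
  assumes "f 0 = 0" "\<And>a b. f (a + b) = f a + f b" "\<And>a b. f (a * b) = f a * f b"
  shows "map_poly f (p * q) = map_poly f p * map_poly f q"
proof (induction p)
  case (pCons a p)
  then show ?case
    by (simp add: map_poly_add map_poly_smult map_poly_pCons assms)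
qed simp

lemma map_poly_reflect_poly:
  assumes "f 0 = 0" "\<And>x. x \<noteq> 0 \<Longrightarrow> f x \<noteq> 0"
  shows "map_poly f (reflect_poly p) = reflect_poly (map_poly f p)"
  by (intro poly_eqI) (simp add: coeff_map_poly assms coeff_reflect_poly degree_map_poly)

lemma inj_power_CHAR_power:
  assumes "prime CHAR('a::idom)"
  shows "inj (\<lambda>y::'a. y ^ (CHAR('a) ^ j))"
proof (rule injI)
  fix y z :: 'a
  assume "y ^ (CHAR('a) ^ j) = z ^ (CHAR('a) ^ j)"
  moreover have "((y - z) + z) ^ (CHAR('a) ^ j) = (y - z) ^ (CHAR('a) ^ j) + z ^ (CHAR('a) ^ j)"
    by (rule freshmans_dream'[OF assms refl])
  ultimately show "y = z"
    by simp
qed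

lemma poly_power_CHAR_power:
  fixes p :: "'a::comm_ring_1 poly"
  assumes "prime CHAR('a)" "e = CHAR('a) ^ j"
  shows "poly p z ^ e = poly (map_poly (\<lambda>c. c ^ e) p) (z ^ e)"
proof -
  have "0 < e"
    using assms prime_gt_0_nat by simp
  then show ?thesis
    by (induction p)
      (simp_all add: zero_power map_poly_pCons freshmans_dream'[OF assms] power_mult_distrib)
qed

lemma card_le_if_power_eq_self:
  fixes A :: "'a::idom set"
  assumes "\<forall>y\<in>A. y ^ N = y" "1 < N"
  shows "card A \<le> N"
proof -
  define W :: "'a poly" where "W = monom 1 N - [:0, 1:]"
  have "coeff W N = 1"
    using assms(2) by (simp add: W_def coeff_eq_0)
  then have "W \<noteq> 0"
    by auto
  have "degree W \<le> N"
    unfolding W_def using assms(2) by (intro degree_diff_le) (auto simp: degree_monom_le)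
  have "A \<subseteq> {y. poly W y = 0}"
    using assms(1) by (auto simp: W_def poly_monom)
  then have "card A \<le> card {y. poly W y = 0}"
    by (rule card_mono[OF poly_roots_finite[OF \<open>W \<noteq> 0\<close>]])
  also have "\<dots> \<le> degree W"
    by (rule card_poly_roots_bound[OF \<open>W \<noteq> 0\<close>])
  finally show ?thesis
    using \<open>degree W \<le> N\<close> by simp
qed

section \<open>Orbits of an injective map\<close>

definition least_period :: "('a \<Rightarrow> 'a) \<Rightarrow> 'a \<Rightarrow> nat" where
  "least_period f x = (LEAST n. 0 < n \<and> (f ^^ n) x = x)"

lemma funpow_diff_eq_self:
  assumes "inj f" "i \<le> j" "(f ^^ i) x = (f ^^ j) x"
  shows "(f ^^ (j - i)) x = x"
proof -
  have "(f ^^ i) ((f ^^ (j - i)) x) = (f ^^ i) x"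
    using assms(2,3) by (metis funpow_add le_add_diff_inverse o_apply)
  then show ?thesis
    using inj_fn[OF assms(1)] by (simp add: inj_eq)
qed

lemma periodic_if_finite_invariant:
  assumes "inj f" "finite S" "f ` S \<subseteq> S" "x \<in> S"
  shows "\<exists>n>0. (f ^^ n) x = x"
proof -
  have orbit: "(f ^^ i) x \<in> S" for i
    by (induction i) (use assms(3,4) in auto)
  have "\<not> inj_on (\<lambda>i. (f ^^ i) x) {0..card S}"
  proof
    assume "inj_on (\<lambda>i. (f ^^ i) x) {0..card S}"
    then have "card ((\<lambda>i. (f ^^ i) x) ` {0..card S}) = Suc (card S)"
      by (simp add: card_image)
    moreover have "card ((\<lambda>i. (f ^^ i) x) ` {0..card S}) \<le> card S"
      using orbit by (intro card_mono[OF assms(2)]) auto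
    ultimately show False
      by simp
  qed
  then obtain i j where "i < j" "(f ^^ i) x = (f ^^ j) x"
    unfolding inj_on_def by (metis linorder_neqE_nat)
  then show ?thesis
    using funpow_diff_eq_self[OF assms(1)] by (intro exI[of _ "j - i"]) auto
qed

lemma least_periodI:
  assumes "0 < n" "(f ^^ n) x = x"
  shows "0 < least_period f x" "(f ^^ least_period f x) x = x"
  using LeastI[of "\<lambda>n. 0 < n \<and> (f ^^ n) x = x", OF conjI[OF assms]]
  unfolding least_period_def by auto

lemma funpow_eq_self_iff_least_period_dvd:
  assumes "0 < n" "(f ^^ n) x = x"
  shows "(f ^^ m) x = x \<longleftrightarrow> least_period f x dvd m"
proof
  let ?d = "least_period f x"
  have multiple: "(f ^^ (?d * t)) x = x" for t
    by (induction t) (simp_all add: funpow_add least_periodI[OF assms])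
  then show "?d dvd m \<Longrightarrow> (f ^^ m) x = x"
    by auto
  assume "(f ^^ m) x = x"
  then have "(f ^^ (m mod ?d)) ((f ^^ (?d * (m div ?d))) x) = x"
    by (metis funpow_add mod_mult_div_eq add.commute o_apply)
  then have "(f ^^ (m mod ?d)) x = x"
    by (simp add: multiple)
  moreover have "m mod ?d < ?d"
    using least_periodI(1)[OF assms] by simp
  ultimately have "m mod ?d = 0"
    using not_less_Least[of "m mod ?d" "\<lambda>n. 0 < n \<and> (f ^^ n) x = x"]
    unfolding least_period_def by auto
  then show "?d dvd m"
    by auto
qed

lemma inj_on_funpow_least_period:
  assumes "inj f" "0 < n" "(f ^^ n) x = x"
  shows "inj_on (\<lambda>i. (f ^^ i) x) {..<least_period f x}"
proof -
  have "i = j" if "i \<le> j" "j < least_period f x" "(f ^^ i) x = (f ^^ j) x" for i j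
  proof -
    have "least_period f x dvd j - i"
      using funpow_diff_eq_self[OF assms(1) that(1,3)]
        funpow_eq_self_iff_least_period_dvd[OF assms(2,3)]
      by simp
    then show "i = j"
      using that(1,2)
      by (metis diff_less_mono2 dvd_imp_le le_antisym less_imp_diff_less not_le zero_less_diff)
  qed
  then show ?thesis
    by (intro inj_onI) (metis lessThan_iff nat_le_linear)
qed

section \<open>Prime factorisations of polynomials\<close>

lemma normalize_eq_self_iff_monic:
  fixes p :: "'a::field_gcd poly"
  assumes "p \<noteq> 0"
  shows "normalize p = p \<longleftrightarrow> lead_coeff p = 1"
proof
  assume "normalize p = p"
  then have "[:unit_factor (lead_coeff p):] = 1"
    using assms unit_factor_normalize[of p] by (simp add: unit_factor_poly_def)
  moreover have "normalize (lead_coeff p) = 1"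
    using assms by (simp add: is_unit_normalize dvd_field_iff)
  ultimately show "lead_coeff p = 1"
    using unit_factor_mult_normalize[of "lead_coeff p"] by (simp add: one_pCons)
next
  assume "lead_coeff p = 1"
  then show "normalize p = p"
    by (simp add: normalize_poly_def one_pCons[symmetric])
qed

lemma prime_factor_monic_coeff_0:
  fixes f :: "'a::field_gcd poly"
  assumes "P \<in># prime_factorization f" "coeff f 0 \<noteq> 0"
  shows "lead_coeff P = 1" "coeff P 0 \<noteq> 0"
proof -
  have "prime P" "P dvd f"
    using assms(1) by (auto simp: in_prime_factors_iff)
  then show "lead_coeff P = 1"
    using normalize_eq_self_iff_monic[of P] by (auto simp: normalize_prime)
  from \<open>P dvd f\<close> obtain g where "f = P * g" ..
  then show "coeff P 0 \<noteq> 0"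
    using assms(2) by (auto simp: coeff_mult_0)
qed

lemma degree_pos_if_irreducible:
  fixes P :: "'a::field poly"
  assumes "irreducible P"
  shows "0 < degree P"
proof -
  have "P \<noteq> 0" "\<not> is_unit P"
    using assms by (auto simp: Factorial_Ring.irreducible_def)
  then show ?thesis
    by (simp add: is_unit_iff_degree)
qed

lemma liouville_eq_power_degree_if_even_count:
  fixes f :: "'a::field_gcd poly"
  assumes "f \<noteq> 0" "even (size {#P \<in># prime_factorization f. even (degree P)#})"
  shows "liouville f = (-1) ^ degree f"
proof -
  let ?M = "prime_factorization f"
  have parity: "even (size M + (\<Sum>P\<in>#M. degree P)) \<longleftrightarrow>
      even (size {#P \<in># M. even (degree P)#})"
    for M :: "'a poly multiset"
    by (induction M) auto
  have degree_prod: "degree (prod_mset M) = (\<Sum>P\<in>#M. degree P)" if "0 \<notin># M"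
    for M :: "'a poly multiset"
    using that by (induction M) (auto simp: degree_mult_eq)
  have "degree f = degree (prod_mset ?M)"
    using assms(1)
    by (simp add: prod_mset_prime_factorization normalize_poly_eq_map_poly degree_map_poly)
  also have "\<dots> = (\<Sum>P\<in>#?M. degree P)"
    by (rule degree_prod) (auto dest: in_prime_factors_imp_prime)
  finally have "even (size ?M + degree f)"
    using parity assms(2) by simp
  then show ?thesis
    unfolding liouville_def by (cases "even (size ?M)") auto
qed

lemma even_size_if_involution_without_fixpoints:
  assumes "image_mset g N = N" "\<forall>x\<in>#N. g (g x) = x \<and> g x \<noteq> x"
  shows "even (size N)"
  using assms
proof (induction "size N" arbitrary: N rule: less_induct)
  case less
  show ?case
  proof (cases "N = {#}")
    case False
    then obtain x where "x \<in># N"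
      by blast
    then obtain N1 where N1: "N = add_mset x N1"
      by (blast dest: multi_member_split)
    have "g x \<noteq> x" "g (g x) = x"
      using \<open>x \<in># N\<close> less.prems(2) by auto
    have "g x \<in># N"
      using \<open>x \<in># N\<close> less.prems(1) by (metis image_eqI set_image_mset)
    then have "g x \<in># N1"
      using N1 \<open>g x \<noteq> x\<close> by simp
    then obtain N' where N: "N = add_mset x (add_mset (g x) N')"
      using N1 by (blast dest: multi_member_split)
    then have "image_mset g N' = N'"
      using less.prems(1) \<open>g (g x) = x\<close> by (simp add: add_mset_commute)
    moreover have "\<forall>x\<in>#N'. g (g x) = x \<and> g x \<noteq> x"
      using less.prems(2) N by simp
    ultimately have "even (size N')"
      using N by (intro less.hyps) simp_all
    then show ?thesis
      using N by simp
  qed simp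
qed

section \<open>The unitary reciprocal\<close>

context
  fixes q k :: nat
  assumes prime_char: "prime CHAR('a::field)" and q_char_power: "q = CHAR('a) ^ k"
begin

lemma q_pos: "0 < q"
  using prime_char prime_gt_0_nat by (simp add: q_char_power)

lemma frob_poly_mult: "frob_poly q (f * g) = frob_poly q f * frob_poly q (g :: 'a poly)"
  unfolding frob_poly_def using q_pos freshmans_dream'[OF prime_char q_char_power]
  by (intro map_poly_mult) (auto simp: power_mult_distrib)

lemma coeff_0_frob_poly: "coeff (frob_poly q (f::'a poly)) 0 = coeff f 0 ^ q"
  using q_pos by (simp add: frob_poly_def coeff_map_poly)

lemma degree_frob_poly: "degree (frob_poly q (f::'a poly)) = degree f"
  unfolding frob_poly_def using q_pos by (intro degree_map_poly) simp

lemma lead_coeff_frob_poly: "lead_coeff (frob_poly q (f::'a poly)) = lead_coeff f ^ q"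
  using q_pos by (simp add: degree_frob_poly) (simp add: frob_poly_def coeff_map_poly)

lemma unitary_recip_mult:
  "unitary_recip q (f * g :: 'a poly) = unitary_recip q f * unitary_recip q g"
  unfolding unitary_recip_def frob_poly_mult reflect_poly_mult coeff_mult_0
  by (simp add: mult_smult_left mult_smult_right mult.commute)

lemma unitary_recip_prod_mset:
  "unitary_recip q (prod_mset M :: 'a poly) = prod_mset (image_mset (unitary_recip q) M)"
proof (induction M)
  case empty
  show ?case
    using q_pos by (simp add: unitary_recip_def frob_poly_def)
qed (simp add: unitary_recip_mult)

lemma degree_unitary_recip:
  assumes "coeff f 0 \<noteq> 0"
  shows "degree (unitary_recip q (f::'a poly)) = degree f"
  using assms q_pos by (simp add: unitary_recip_def coeff_0_frob_poly degree_frob_poly)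

lemma lead_coeff_unitary_recip:
  assumes "coeff f 0 \<noteq> 0"
  shows "lead_coeff (unitary_recip q (f::'a poly)) = 1"
  using assms q_pos
  by (simp add: degree_unitary_recip) 
     (simp add: unitary_recip_def coeff_reflect_poly coeff_0_frob_poly degree_frob_poly)

lemma coeff_0_unitary_recip:
  assumes "coeff f 0 \<noteq> 0"
  shows "coeff (unitary_recip q (f::'a poly)) 0 \<noteq> 0"
  using assms q_pos by (auto simp: unitary_recip_def coeff_0_frob_poly lead_coeff_frob_poly)

end

section \<open>Roots in the algebraic closure\<close>

lemma irreducible_dvd_if_common_root:
  fixes P g :: "'a::field_gcd poly"
  assumes "irreducible P" "poly (map_poly to_ac P) \<alpha> = 0"
    and "poly (map_poly to_ac g) \<alpha> = 0"
  shows "P dvd g"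
proof (rule ccontr)
  assume "\<not> P dvd g"
  then have "gcd P g = 1"
    using assms(1) irreducible_imp_prime_elem prime_elem_imp_coprime by fastforce
  then obtain a b where "a * P + b * g = 1"
    using bezout_coefficients_fst_snd by metis
  then have "poly (map_poly to_ac (a * P + b * g)) \<alpha> = 1"
    by simp
  then show False
    using assms by (simp add: map_poly_add map_poly_mult)
qed

lemma inj_on_poly_Poly_root:
  fixes P :: "'a::field_gcd poly"
  assumes "irreducible P" "poly (map_poly to_ac P) \<alpha> = 0"
  shows "inj_on (\<lambda>xs. poly (map_poly to_ac (Poly xs)) \<alpha>) {xs. length xs = degree P}"
proof (rule inj_onI)
  fix xs ys
  assume xs: "xs \<in> {xs. length xs = degree P}" and ys: "ys \<in> {xs. length xs = degree P}"
    and "poly (map_poly to_ac (Poly xs)) \<alpha> = poly (map_poly to_ac (Poly ys)) \<alpha>"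
  then have "poly (map_poly to_ac (Poly xs - Poly ys)) \<alpha> = 0"
    by (simp add: map_poly_diff)
  then have "P dvd Poly xs - Poly ys"
    by (rule irreducible_dvd_if_common_root[OF assms])
  have "degree (Poly xs - Poly ys) < degree P"
  proof -
    have "degree (Poly xs - Poly ys) \<le> degree P - 1"
      using xs ys by (intro degree_le) (auto simp: nth_default_def)
    then show ?thesis
      using degree_pos_if_irreducible[OF assms(1)] by simp
  qed
  have Poly_eq: "Poly xs = Poly ys"
  proof (rule ccontr)
    assume "Poly xs \<noteq> Poly ys"
    then have "degree P \<le> degree (Poly xs - Poly ys)"
      using dvd_imp_degree_le[OF \<open>P dvd Poly xs - Poly ys\<close>] by simp
    with \<open>degree (Poly xs - Poly ys) < degree P\<close> show False
      by simp
  qed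
  show "xs = ys"
  proof (rule nth_equalityI)
    show "length xs = length ys"
      using xs ys by simp
    show "xs ! i = ys ! i" if "i < length xs" for i
      using that \<open>length xs = length ys\<close>
        arg_cong[OF Poly_eq, of "\<lambda>p. coeff p i"]
      by (simp add: nth_default_nth)
  qed
qed

lemma roots_map_poly_to_ac:
  fixes P :: "'a::field poly"
  assumes "P \<noteq> 0"
  shows "finite {z. poly (map_poly to_ac P) z = 0}"
    and "card {z. poly (map_poly to_ac P) z = 0} \<le> degree P"
proof -
  have "map_poly to_ac P \<noteq> 0"
    using assms by (simp add: map_poly_eq_0_iff)
  moreover have "degree (map_poly to_ac P) = degree P"
    by (rule degree_map_poly) simp
  ultimately show "finite {z. poly (map_poly to_ac P) z = 0}"
    and "card {z. poly (map_poly to_ac P) z = 0} \<le> degree P"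
    using poly_roots_finite card_poly_roots_bound by metis+
qed

definition frobenius_ac :: "'a::{field,finite} alg_closure \<Rightarrow> 'a alg_closure" where
  "frobenius_ac z = z ^ CARD('a)"

lemma funpow_frobenius_ac:
  fixes z :: "'a::{field,finite} alg_closure"
  shows "(frobenius_ac ^^ m) z = z ^ (CARD('a) ^ m)"
  by (induction m) (simp_all add: frobenius_ac_def power_mult[symmetric] mult.commute)

section \<open>Fields of square order\<close>

context
  fixes q k :: nat
  assumes q_char_power: "q = CHAR('a::{field_gcd,finite}) ^ k" and card_eq: "CARD('a) = q ^ 2"
begin

lemma prime_char: "prime CHAR('a)"
  by (intro prime_CHAR_semidom finite_imp_CHAR_pos) simp

lemma power_q_power_q: "((a::'a) ^ q) ^ q = a"
  using power_card_UNIV_eq_self[of a] by (simp add: card_eq power2_eq_square power_mult[symmetric])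

lemma frob_poly_frob_poly: "frob_poly q (frob_poly q (f :: 'a poly)) = f"
  unfolding frob_poly_def using q_pos[OF prime_char q_char_power]
  by (simp add: map_poly_map_poly o_def power_q_power_q)

lemma unitary_recip_unitary_recip:
  assumes "coeff f 0 \<noteq> 0" "lead_coeff f = 1"
  shows "unitary_recip q (unitary_recip q (f::'a poly)) = f"
proof -
  define a where "a = coeff f 0"
  have "frob_poly q (unitary_recip q f) =
      smult (inverse (a ^ q) ^ q) (reflect_poly (frob_poly q (frob_poly q f)))"
    using q_pos[OF prime_char q_char_power]
    by (simp add: unitary_recip_def frob_poly_def[of q "smult _ _"] map_poly_smult
        map_poly_reflect_poly power_mult_distrib zero_power a_def
        coeff_0_frob_poly[OF prime_char q_char_power])
       (simp add: frob_poly_def)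
  then have "frob_poly q (unitary_recip q f) = smult (inverse a) (reflect_poly f)"
    by (simp add: frob_poly_frob_poly power_inverse power_q_power_q)
  then show ?thesis
    using assms by (simp add: unitary_recip_def[of q "unitary_recip q f"] reflect_poly_smult a_def)
qed

lemma irreducible_unitary_recip:
  assumes "irreducible P" "lead_coeff P = 1" "coeff P 0 \<noteq> 0"
  shows "irreducible (unitary_recip q (P::'a poly))"
proof (rule Factorial_Ring.irreducibleI)
  note twist = prime_char q_char_power
  have "0 < degree P"
    using assms(1) by (rule degree_pos_if_irreducible)
  show "unitary_recip q P \<noteq> 0"
    using lead_coeff_unitary_recip[OF twist assms(3)] by auto
  then show "\<not> is_unit (unitary_recip q P)"
    using \<open>0 < degree P\<close>
    by (simp add: is_unit_iff_degree degree_unitary_recip[OF twist assms(3)])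
  fix a b
  assume ab: "unitary_recip q P = a * b"
  then have "coeff a 0 \<noteq> 0" "coeff b 0 \<noteq> 0"
    using coeff_0_unitary_recip[OF twist assms(3)] by (auto simp: coeff_mult_0)
  moreover have "P = unitary_recip q a * unitary_recip q b"
    using unitary_recip_unitary_recip[OF assms(3,2)] ab unitary_recip_mult[OF twist] by simp
  then have "is_unit (unitary_recip q a) \<or> is_unit (unitary_recip q b)"
    using assms(1) Factorial_Ring.irreducibleD by blast
  ultimately show "is_unit a \<or> is_unit b"
    using lead_coeff_unitary_recip[OF twist] degree_unitary_recip[OF twist]
    by (metis is_unit_iff_degree leading_coeff_0_iff one_neq_zero)
qed

lemma prime_unitary_recip:
  assumes "prime P" "coeff P 0 \<noteq> 0"
  shows "prime (unitary_recip q (P::'a poly))"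
proof (rule normalization_semidom_class.primeI)
  have "lead_coeff P = 1"
    using assms(1) normalize_eq_self_iff_monic[of P] by (auto simp: normalize_prime)
  then show "prime_elem (unitary_recip q P)"
    using assms by (intro irreducible_imp_prime_elem irreducible_unitary_recip)
      (auto intro: prime_elem_imp_irreducible)
  have "lead_coeff (unitary_recip q P) = 1"
    by (rule lead_coeff_unitary_recip[OF prime_char q_char_power assms(2)])
  moreover from this have "unitary_recip q P \<noteq> 0"
    by auto
  ultimately show "normalize (unitary_recip q P) = unitary_recip q P"
    by (simp add: normalize_eq_self_iff_monic)
qed

lemma image_mset_unitary_recip_prime_factorization:
  assumes "unitary_self_reciprocal q (f::'a poly)"
  shows "image_mset (unitary_recip q) (prime_factorization f) = prime_factorization f"
proof -
  let ?M = "prime_factorization f"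
  have f: "lead_coeff f = 1" "coeff f 0 \<noteq> 0" "unitary_recip q f = f" "f \<noteq> 0"
    using assms by (auto simp: unitary_self_reciprocal_def poly_0_coeff_0)
  have "prime_factorization (prod_mset (image_mset (unitary_recip q) ?M)) =
      image_mset (unitary_recip q) ?M"
    using prime_factor_monic_coeff_0(2)[of _ f] f(2)
    by (intro prime_factorization_prod_mset_primes)
       (auto intro: prime_unitary_recip dest: in_prime_factors_imp_prime)
  moreover have "prod_mset ?M = f"
    using f(1,4) by (simp add: prod_mset_prime_factorization normalize_eq_self_iff_monic)
  ultimately show ?thesis
    using f(3) by (simp add: unitary_recip_prod_mset[OF prime_char q_char_power, symmetric])
qed

lemma card_eq_char_power: "CARD('a) = CHAR('a) ^ (2 * k)"
  by (simp add: card_eq q_char_power power_mult mult.commute)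

lemma inj_frobenius_ac: "inj (frobenius_ac :: 'a alg_closure \<Rightarrow> _)"
proof -
  have "prime CHAR('a alg_closure)"
    using prime_char by simp
  then have "inj (\<lambda>z::'a alg_closure. z ^ (CHAR('a alg_closure) ^ (2 * k)))"
    by (rule inj_power_CHAR_power)
  then show ?thesis
    by (simp add: frobenius_ac_def[abs_def] card_eq_char_power)
qed

lemma poly_frobenius_ac:
  "poly (map_poly to_ac g) (frobenius_ac z) = frobenius_ac (poly (map_poly to_ac (g::'a poly)) z)"
proof -
  have "prime CHAR('a alg_closure)" "CARD('a) = CHAR('a alg_closure) ^ (2 * k)"
    using prime_char card_eq_char_power by simp_all
  then have "poly (map_poly to_ac g) z ^ CARD('a) =
      poly (map_poly (\<lambda>c. c ^ CARD('a)) (map_poly to_ac g)) (z ^ CARD('a))"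
    by (rule poly_power_CHAR_power)
  also have "map_poly (\<lambda>c. c ^ CARD('a)) (map_poly to_ac g) = map_poly to_ac g"
    by (simp add: map_poly_map_poly o_def power_card_UNIV_eq_self flip: to_ac_power)
  finally show ?thesis
    by (simp add: frobenius_ac_def)
qed

lemma poly_funpow_frobenius_ac:
  "poly (map_poly to_ac g) ((frobenius_ac ^^ m) z) =
    (frobenius_ac ^^ m) (poly (map_poly to_ac (g::'a poly)) z)"
proof (induction m)
  case (Suc m)
  then show ?case
    by (simp only: funpow.simps(2) o_apply poly_frobenius_ac)
qed simp

lemma root_funpow_frobenius_ac:
  assumes "poly (map_poly to_ac (g::'a poly)) \<alpha> = 0"
  shows "poly (map_poly to_ac g) ((frobenius_ac ^^ m) \<alpha>) = 0"
  using assms poly_funpow_frobenius_ac[of g m \<alpha>]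
  by (simp add: funpow_frobenius_ac zero_power)

(* The Q^n polynomials of degree < n take distinct values at the root, and all of them are
   fixed by the d-th Frobenius iterate, which has at most Q^d fixed points. *)
lemma degree_le_frobenius_ac_period:
  assumes "irreducible P" "poly (map_poly to_ac P) \<alpha> = 0"
    and "0 < d" "(frobenius_ac ^^ d) \<alpha> = \<alpha>"
  shows "degree (P::'a poly) \<le> d"
proof -
  let ?n = "degree P"
  define L :: "'a list set" where "L = {xs. length xs = ?n}"
  define E where "E xs = poly (map_poly to_ac (Poly xs)) \<alpha>" for xs
  have "inj_on E L"
    unfolding E_def L_def using assms(1,2) by (rule inj_on_poly_Poly_root)
  have "y ^ (CARD('a) ^ d) = y" if "y \<in> E ` L" for y
  proof -
    from that obtain xs where "y = E xs"
      by blast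
    then have "y ^ (CARD('a) ^ d) = (frobenius_ac ^^ d) (E xs)"
      by (simp add: funpow_frobenius_ac)
    also have "\<dots> = E xs"
      using assms(4) by (simp add: E_def flip: poly_funpow_frobenius_ac)
    finally show ?thesis
      using \<open>y = E xs\<close> by simp
  qed
  then have "card (E ` L) \<le> CARD('a) ^ d"
    using one_less_card_UNIV_field[where 'a='a] assms(3)
    by (intro card_le_if_power_eq_self one_less_power) auto
  moreover have "card L = CARD('a) ^ ?n"
    using card_lists_length_eq[of "UNIV :: 'a set" ?n] by (simp add: L_def)
  ultimately have "CARD('a) ^ ?n \<le> CARD('a) ^ d"
    using card_image[OF \<open>inj_on E L\<close>] by simp
  then show ?thesis
    by (rule power_le_imp_le_exp[OF one_less_card_UNIV_field])
qed

lemma least_period_frobenius_ac_root: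
  assumes "irreducible P" "poly (map_poly to_ac P) \<alpha> = 0"
  shows "least_period frobenius_ac \<alpha> = degree (P::'a poly)"
    and "(frobenius_ac ^^ degree P) \<alpha> = \<alpha>"
proof -
  define R where "R = {z. poly (map_poly to_ac P) z = 0}"
  have "P \<noteq> 0"
    using assms(1) by auto
  then have "finite R" "card R \<le> degree P"
    unfolding R_def by (rule roots_map_poly_to_ac)+
  obtain n where n: "0 < n" "(frobenius_ac ^^ n) \<alpha> = \<alpha>"
    using periodic_if_finite_invariant[OF inj_frobenius_ac \<open>finite R\<close>, of \<alpha>] assms(2)
      root_funpow_frobenius_ac[of P _ 1]
    by (auto simp: R_def)
  let ?d = "least_period frobenius_ac \<alpha>"
  have "?d = card ((\<lambda>i. (frobenius_ac ^^ i) \<alpha>) ` {..<?d})"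
    using inj_on_funpow_least_period[OF inj_frobenius_ac n] by (simp add: card_image)
  also have "\<dots> \<le> card R"
    using assms(2) root_funpow_frobenius_ac
    by (intro card_mono \<open>finite R\<close>) (auto simp: R_def)
  finally have "?d \<le> degree P"
    using \<open>card R \<le> degree P\<close> by simp
  moreover have "degree P \<le> ?d"
    using degree_le_frobenius_ac_period[OF assms] least_periodI[OF n] by blast
  ultimately show "least_period frobenius_ac \<alpha> = degree P"
    by simp
  then show "(frobenius_ac ^^ degree P) \<alpha> = \<alpha>"
    using least_periodI(2)[OF n] by simp
qed

lemma funpow_frobenius_ac_root_eq_self_iff:
  assumes "irreducible P" "poly (map_poly to_ac P) \<alpha> = 0"
  shows "(frobenius_ac ^^ m) \<alpha> = \<alpha> \<longleftrightarrow> degree (P::'a poly) dvd m"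
  using funpow_eq_self_iff_least_period_dvd[OF degree_pos_if_irreducible[OF assms(1)]
      least_period_frobenius_ac_root(2)[OF assms]]
  by (simp add: least_period_frobenius_ac_root(1)[OF assms])

lemma roots_eq_frobenius_ac_orbit:
  assumes "irreducible P" "poly (map_poly to_ac P) \<alpha> = 0"
  shows "{z. poly (map_poly to_ac P) z = 0} =
    (\<lambda>i. (frobenius_ac ^^ i) \<alpha>) ` {..<degree (P::'a poly)}"
proof (rule card_seteq[symmetric])
  have "P \<noteq> 0"
    using assms(1) by auto
  then show "finite {z. poly (map_poly to_ac P) z = 0}"
    by (rule roots_map_poly_to_ac)
  show "(\<lambda>i. (frobenius_ac ^^ i) \<alpha>) ` {..<degree P} \<subseteq>
      {z. poly (map_poly to_ac P) z = 0}"
    using assms(2) root_funpow_frobenius_ac by auto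
  have "inj_on (\<lambda>i. (frobenius_ac ^^ i) \<alpha>) {..<degree P}"
    using inj_on_funpow_least_period[OF inj_frobenius_ac degree_pos_if_irreducible[OF assms(1)]
        least_period_frobenius_ac_root(2)[OF assms]]
    by (simp add: least_period_frobenius_ac_root(1)[OF assms])
  then show "card {z. poly (map_poly to_ac P) z = 0} \<le>
      card ((\<lambda>i. (frobenius_ac ^^ i) \<alpha>) ` {..<degree P})"
    using roots_map_poly_to_ac(2)[OF \<open>P \<noteq> 0\<close>] by (simp add: card_image)
qed

lemma root_inverse_power_if_root_unitary_recip:
  assumes "coeff P 0 \<noteq> 0" "z \<noteq> 0" "poly (map_poly to_ac (unitary_recip q P)) z = 0"
  shows "poly (map_poly to_ac (P::'a poly)) (inverse z ^ q) = 0"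
proof -
  let ?h = "frob_poly q P"
  have "coeff ?h 0 \<noteq> 0"
    using assms(1) q_pos[OF prime_char q_char_power]
    by (simp add: coeff_0_frob_poly[OF prime_char q_char_power])
  moreover have "map_poly to_ac (unitary_recip q P) =
      smult (to_ac (inverse (coeff ?h 0))) (reflect_poly (map_poly to_ac ?h))"
    by (simp add: unitary_recip_def map_poly_smult map_poly_reflect_poly)
  ultimately have "poly (map_poly to_ac ?h) (inverse z) = 0"
    using assms(2,3) by (simp add: poly_reflect_poly_nz)
  moreover have "prime CHAR('a alg_closure)" "q = CHAR('a alg_closure) ^ k"
    using prime_char q_char_power by simp_all
  then have "poly (map_poly to_ac ?h) (inverse z) ^ q =
      poly (map_poly (\<lambda>c. c ^ q) (map_poly to_ac ?h)) (inverse z ^ q)"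
    by (rule poly_power_CHAR_power)
  moreover have "map_poly (\<lambda>c. c ^ q) (map_poly to_ac ?h) = map_poly to_ac P"
    using q_pos[OF prime_char q_char_power]
    by (simp add: frob_poly_def map_poly_map_poly o_def zero_power power_q_power_q
        flip: to_ac_power)
  ultimately show ?thesis
    using q_pos[OF prime_char q_char_power] by (simp add: zero_power)
qed

lemma funpow_frobenius_ac_add_self:
  assumes "(frobenius_ac ^^ i) \<alpha> = inverse \<alpha> ^ q"
  shows "(frobenius_ac ^^ (i + i)) \<alpha> = frobenius_ac (\<alpha>::'a alg_closure)"
proof -
  have "(frobenius_ac ^^ (i + i)) \<alpha> = (frobenius_ac ^^ i) (inverse \<alpha> ^ q)"
    using assms by (simp add: funpow_add)
  also have "\<dots> = (inverse \<alpha> ^ (CARD('a) ^ i)) ^ q"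
    by (simp add: funpow_frobenius_ac power_mult[symmetric] mult.commute)
  also have "\<dots> = inverse ((frobenius_ac ^^ i) \<alpha>) ^ q"
    by (simp add: funpow_frobenius_ac power_inverse)
  also have "\<dots> = (\<alpha> ^ q) ^ q"
    using assms by (simp add: power_inverse)
  also have "\<dots> = frobenius_ac \<alpha>"
    by (simp add: frobenius_ac_def card_eq power2_eq_square power_mult)
  finally show ?thesis .
qed

lemma odd_degree_if_unitary_recip_eq_self:
  assumes "irreducible P" "coeff P 0 \<noteq> 0" "unitary_recip q P = P"
  shows "odd (degree (P::'a poly))"
proof
  let ?n = "degree P" and ?\<phi> = "frobenius_ac :: 'a alg_closure \<Rightarrow> _"
  assume "even ?n"
  have "0 < ?n"
    using assms(1) by (rule degree_pos_if_irreducible)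
  then obtain \<alpha> where \<alpha>: "poly (map_poly to_ac P) \<alpha> = 0"
    using alg_closed_imp_poly_has_root[of "map_poly to_ac P"] by (auto simp: degree_map_poly)
  have "\<alpha> \<noteq> 0"
    using \<alpha> assms(2) by (auto simp: poly_0_coeff_0 coeff_map_poly)
  then have "poly (map_poly to_ac P) (inverse \<alpha> ^ q) = 0"
    using root_inverse_power_if_root_unitary_recip assms(2,3) \<alpha> by simp
  then have "inverse \<alpha> ^ q \<in> (\<lambda>i. (?\<phi> ^^ i) \<alpha>) ` {..<?n}"
    using roots_eq_frobenius_ac_orbit[OF assms(1) \<alpha>] by blast
  then obtain i where "inverse \<alpha> ^ q = (?\<phi> ^^ i) \<alpha>"
    by blast
  then have twice: "(?\<phi> ^^ (i + i)) \<alpha> = ?\<phi> \<alpha>"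
    by (rule funpow_frobenius_ac_add_self[OF sym])
  \<comment> \<open>n divides 2i - 1, written as n - 1 + 2i since i may be 0\<close>
  have "(?\<phi> ^^ (?n - 1 + (i + i))) \<alpha> = (?\<phi> ^^ (?n - 1)) (?\<phi> \<alpha>)"
    using twice by (simp add: funpow_add)
  also have "\<dots> = (?\<phi> ^^ Suc (?n - 1)) \<alpha>"
    by (simp only: funpow_Suc_right o_apply)
  also have "\<dots> = \<alpha>"
    using \<open>0 < ?n\<close> funpow_frobenius_ac_root_eq_self_iff[OF assms(1) \<alpha>, of ?n]
    by simp
  finally have "?n dvd ?n - 1 + (i + i)"
    using funpow_frobenius_ac_root_eq_self_iff[OF assms(1) \<alpha>] by simp
  with \<open>even ?n\<close> have "even (?n - 1 + (i + i))"
    by (rule dvd_trans)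
  with \<open>even ?n\<close> \<open>0 < ?n\<close> show False
    by presburger
qed

lemma even_count_even_degree_prime_factors:
  assumes "unitary_self_reciprocal q (f::'a poly)"
  shows "even (size {#P \<in># prime_factorization f. even (degree P)#})"
proof (rule even_size_if_involution_without_fixpoints)
  let ?U = "unitary_recip q" and ?M = "prime_factorization f"
  have "coeff f 0 \<noteq> 0"
    using assms by (simp add: unitary_self_reciprocal_def poly_0_coeff_0)
  then have factor: "lead_coeff P = 1" "coeff P 0 \<noteq> 0" "irreducible P" if "P \<in># ?M" for P
    using prime_factor_monic_coeff_0[OF that \<open>coeff f 0 \<noteq> 0\<close>] that
    by (auto dest: in_prime_factors_imp_prime intro: prime_elem_imp_irreducible)
  have "{#P \<in># ?M. even (degree P)#} = {#P \<in># image_mset ?U ?M. even (degree P)#}"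
    by (simp add: image_mset_unitary_recip_prime_factorization[OF assms])
  also have "\<dots> = image_mset ?U {#P \<in># ?M. even (degree (?U P))#}"
    by (rule filter_mset_image_mset)
  also have "{#P \<in># ?M. even (degree (?U P))#} = {#P \<in># ?M. even (degree P)#}"
    using factor
    by (intro filter_mset_cong) (auto simp: degree_unitary_recip[OF prime_char q_char_power])
  finally show "image_mset ?U {#P \<in># ?M. even (degree P)#} = {#P \<in># ?M. even (degree P)#}"
    by simp
  show "\<forall>P\<in>#{#P \<in># ?M. even (degree P)#}. ?U (?U P) = P \<and> ?U P \<noteq> P"
    using factor unitary_recip_unitary_recip odd_degree_if_unitary_recip_eq_self by fastforce
qed

end

theorem theorem5p13:
  fixes q :: nat and f :: "'a::{field_gcd,finite} poly"
  assumes "\<exists>p k. prime p \<and> k > 0 \<and> q = p ^ k"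
    and "card (UNIV :: 'a set) = q ^ 2"
    and "unitary_self_reciprocal q f"
  shows "liouville f = (-1) ^ degree f"
proof -
  obtain p k where "prime p" "k > 0" "q = p ^ k"
    using assms(1) by blast
  then have "CHAR('a) = p"
    using assms(2)
    by (intro CHAR_eq_if_card_eq_prime_power[of p "k * 2"]) (simp_all add: power_mult)
  then have "q = CHAR('a) ^ k"
    using \<open>q = p ^ k\<close> by simp
  have "f \<noteq> 0"
    using assms(3) by (auto simp: unitary_self_reciprocal_def)
  moreover have "even (size {#P \<in># prime_factorization f. even (degree P)#})"
    using \<open>q = CHAR('a) ^ k\<close> assms(2,3) by (rule even_count_even_degree_prime_factors)
  ultimately show ?thesis
    by (rule liouville_eq_power_degree_if_even_count)
qed

end
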